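(* Let $n,l\in\mathbb N$, $1<u\le2$ with $\frac1u+\frac1{u'}=1$, and $s>\frac{ln}u$. Let $B$ be a proper subset of $J_l=\{1,\dots,l\}$, with $\#B$ its number of elements. For $l_0\in J_l\setminus B$ define $$S_B^{l_0}(s)=\Big\{(x_1,\dots,x_l)\in R_B:\ \frac sn>\frac{\#B+1}{u}+\sum_{i\in J_l\setminus(B\cup\{l_0\})}x_i\Big\}.$$ Then the convex hull of $\bigcup_{l_0\in J_l\setminus B}S_B^{l_0}(s)$ equals $S_B(s)$.
   Context: $R_B=\{(x_1,\dots,x_l)\in(0,1)^l: 0<x_i\le\frac1u \text{ for } i\in B,\ \frac1u<x_i<1\text{ for } i\notin B\}$ and $S_B(s)=\{(x_1,\dots,x_l)\in R_B:\ \sum_{i\in J_l}x_i-\frac1{u'}<\frac sn+\sum_{i\in B}(x_i-\frac1u)\}$. *)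

theory Defs
  imports "HOL-Analysis.Analysis"
begin

text \<open>Points of R^l are vectors indexed by a finite type 'l, whose elements
play the role of the index set J_l = {1,...,l} (so l = CARD('l)).\<close>

definition R_B :: "real \<Rightarrow> 'l::finite set \<Rightarrow> (real^'l) set" where
  "R_B u B = {x. (\<forall>i. 0 < x$i \<and> x$i < 1) \<and>
                 (\<forall>i\<in>B. 0 < x$i \<and> x$i \<le> 1/u) \<and>
                 (\<forall>i. i \<notin> B \<longrightarrow> 1/u < x$i \<and> x$i < 1)}"

definition S_B :: "real \<Rightarrow> real \<Rightarrow> nat \<Rightarrow> real \<Rightarrow> 'l::finite set \<Rightarrow> (real^'l) set" where
  "S_B u u' n s B = {x \<in> R_B u B.
      (\<Sum>i\<in>UNIV. x$i) - 1/u' < s / real n + (\<Sum>i\<in>B. (x$i - 1/u))}"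

definition S_B_l0 :: "real \<Rightarrow> nat \<Rightarrow> real \<Rightarrow> 'l::finite set \<Rightarrow> 'l \<Rightarrow> (real^'l) set" where
  "S_B_l0 u n s B l0 = {x \<in> R_B u B.
      s / real n > (real (card B) + 1) / u + (\<Sum>i\<in>UNIV - (B \<union> {l0}). x$i)}"

end

theory Submission
  imports Defs
begin

text \<open>Write a = 1/u, C for the complement of B and K = s/n - (#B + 1)/u. Inside R_B, the set
  S_B(s) is cut out by sum_C x < K + 1 and S_B^j(s) by sum_C x - x_j < K; as x_j < 1, every S_B^j(s)
  lies in the convex set S_B(s). Conversely, given x in S_B(s), let v_j agree with x on B, equal a
  on C - {j} and carry the whole excess sum_C (x_i - a) on top of a at j. Then x is the convex
  combination of the v_j with weights proportional to x_j - a. Moving from x towards v_j preserves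
  sum_C and raises x_j, and some step in (0,1) lands in S_B^j(s); this is where s > ln/u, i.e.
  (#C - 1) a < K, is needed. Finally, a convex combination of the v_j lies in the convex hull of
  any points x + t_j (v_j - x) with t_j > 0.\<close>

lemma mem_convex_hull_steps_towards:
  fixes v :: "'i \<Rightarrow> 'a::real_vector"
  assumes "finite I" and "\<And>j. j \<in> I \<Longrightarrow> 0 \<le> \<mu> j" and "sum \<mu> I = 1"
    and "x = (\<Sum>j\<in>I. \<mu> j *\<^sub>R v j)" and "\<And>j. j \<in> I \<Longrightarrow> 0 < \<theta> j"
  shows "x \<in> convex hull ((\<lambda>j. (1 - \<theta> j) *\<^sub>R x + \<theta> j *\<^sub>R v j) ` I)"
proof -
  define Z where "Z = (\<Sum>j\<in>I. \<mu> j / \<theta> j)"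
  define w where "w j = \<mu> j / \<theta> j / Z" for j
  have "Z > 0"
  proof -
    obtain k where "k \<in> I" "\<mu> k > 0"
      using assms(2,3) by (metis less_eq_real_def sum.neutral zero_neq_one)
    then show ?thesis
      unfolding Z_def using assms by (intro sum_pos2) (auto intro: divide_nonneg_pos)
  qed
  have w_sum: "sum w I = 1"
  proof -
    have "sum w I = Z / Z"
      unfolding w_def Z_def by (rule sum_divide_distrib[symmetric])
    then show ?thesis using \<open>Z > 0\<close> by simp
  qed
  have w_\<theta>: "w j * \<theta> j = \<mu> j / Z" if "j \<in> I" for j
    using assms(5)[OF that] by (simp add: w_def)
  have "(\<Sum>j\<in>I. w j *\<^sub>R ((1 - \<theta> j) *\<^sub>R x + \<theta> j *\<^sub>R v j))
      = (\<Sum>j\<in>I. w j *\<^sub>R x) - (\<Sum>j\<in>I. (\<mu> j / Z) *\<^sub>R x) + (\<Sum>j\<in>I. (\<mu> j / Z) *\<^sub>R v j)"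
  proof -
    have "w j *\<^sub>R ((1 - \<theta> j) *\<^sub>R x + \<theta> j *\<^sub>R v j)
        = w j *\<^sub>R x - (\<mu> j / Z) *\<^sub>R x + (\<mu> j / Z) *\<^sub>R v j" if "j \<in> I" for j
      unfolding w_\<theta>[OF that, symmetric] by (simp add: algebra_simps)
    then show ?thesis
      by (simp add: sum.distrib sum_subtractf cong: sum.cong)
  qed
  also have "\<dots> = x"
  proof -
    have "(\<Sum>j\<in>I. w j *\<^sub>R x) = x"
      using w_sum by (simp flip: scaleR_left.sum)
    moreover have "(\<Sum>j\<in>I. (\<mu> j / Z) *\<^sub>R x) = inverse Z *\<^sub>R x"
      using assms(3) by (simp add: divide_inverse_commute flip: scaleR_left.sum sum_distrib_left)
    moreover have "(\<Sum>j\<in>I. (\<mu> j / Z) *\<^sub>R v j) = inverse Z *\<^sub>R x"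
      using assms(4) by (simp add: scaleR_sum_right divide_inverse_commute)
    ultimately show ?thesis by simp
  qed
  finally have "x = (\<Sum>j\<in>I. w j *\<^sub>R ((1 - \<theta> j) *\<^sub>R x + \<theta> j *\<^sub>R v j))" ..
  also have "\<dots> \<in> convex hull ((\<lambda>j. (1 - \<theta> j) *\<^sub>R x + \<theta> j *\<^sub>R v j) ` I)"
    using assms \<open>Z > 0\<close> w_sum by (intro convex_sum) (auto simp: w_def intro: hull_inc divide_nonneg_pos)
  finally show ?thesis .
qed

lemma exists_factor_between:
  fixes \<alpha> \<beta> E :: real
  assumes "0 \<le> E" "\<alpha> < \<beta>" "0 < \<beta>" "\<alpha> < E"
  shows "\<exists>\<theta>. 0 < \<theta> \<and> \<theta> < 1 \<and> \<alpha> < \<theta> * E \<and> \<theta> * E < \<beta>"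
proof (cases "E = 0")
  case True
  then show ?thesis using assms by (intro exI[of _ "1/2"]) auto
next
  case False
  define \<gamma> where "\<gamma> = (max \<alpha> 0 + min \<beta> E) / 2"
  have "max \<alpha> 0 < \<gamma>" "\<gamma> < min \<beta> E"
    using assms False unfolding \<gamma>_def by auto
  then show ?thesis
    using assms False by (intro exI[of _ "\<gamma> / E"]) (auto simp: field_simps)
qed

lemma mem_R_B:
  assumes "1 < u"
  shows "x \<in> R_B u B \<longleftrightarrow>
    (\<forall>i\<in>B. 0 < x$i \<and> x$i \<le> 1/u) \<and> (\<forall>i\<in>-B. 1/u < x$i \<and> x$i < 1)"
proof -
  have "0 < 1/u" "1/u < 1" using assms by auto
  have "0 < x$i \<and> x$i < 1"
    if "\<forall>i\<in>B. 0 < x$i \<and> x$i \<le> 1/u" "\<forall>i\<in>-B. 1/u < x$i \<and> x$i < 1" for i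
  proof (cases "i \<in> B")
    case True
    then have "0 < x$i" "x$i \<le> 1/u" using that by auto
    then show ?thesis using \<open>1/u < 1\<close> by linarith
  next
    case False
    then have "1/u < x$i" "x$i < 1" using that by auto
    then show ?thesis using \<open>0 < 1/u\<close> by linarith
  qed
  then show ?thesis
    unfolding R_B_def by auto
qed

lemma convex_R_B: "convex (R_B u B)"
proof -
  have "R_B u B = (\<Inter>i. (\<lambda>x. x$i) -` ({0<..<1} \<inter> (if i \<in> B then {0<..1/u} else {1/u<..<1})))"
    unfolding R_B_def by (auto split: if_splits)
  also have "convex \<dots>"
    by (intro convex_INT ballI convex_linear_vimage convex_Int) (auto intro: bounded_linear.linear)
  finally show ?thesis .
qed

lemma convex_R_B_sum_less:
  fixes B :: "'l::finite set"
  shows "convex {x \<in> R_B u B. (\<Sum>i\<in>-B. x$i) < c}"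
proof -
  have "linear (\<lambda>x::real^'l. \<Sum>i\<in>-B. x$i)"
    by (intro linear_compose_sum) (auto intro: bounded_linear.linear)
  then have "convex (R_B u B \<inter> (\<lambda>x::real^'l. \<Sum>i\<in>-B. x$i) -` {..<c})"
    by (intro convex_Int convex_R_B convex_linear_vimage) simp_all
  then show ?thesis
    by (simp add: Int_def)
qed

lemma S_B_eq:
  fixes B :: "'l::finite set"
  assumes "1/u + 1/u' = 1"
  shows "S_B u u' n s B = {x \<in> R_B u B. (\<Sum>i\<in>-B. x$i) < s / n - (real (card B) + 1) / u + 1}"
proof -
  have "(\<Sum>i\<in>UNIV. x$i) - 1/u' < s / n + (\<Sum>i\<in>B. (x$i - 1/u))
      \<longleftrightarrow> (\<Sum>i\<in>-B. x$i) < s / n - (real (card B) + 1) / u + 1" for x :: "real^'l"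
  proof -
    have "(\<Sum>i\<in>UNIV. x$i) = (\<Sum>i\<in>-B. x$i) + (\<Sum>i\<in>B. x$i)"
      using sum.union_disjoint[of B "-B" "\<lambda>i. x$i"] by simp
    moreover have "(\<Sum>i\<in>B. (x$i - 1/u)) = (\<Sum>i\<in>B. x$i) - card B / u"
      by (simp add: sum_subtractf)
    moreover have "(real (card B) + 1) / u = card B / u + 1 / u"
      by (rule add_divide_distrib)
    ultimately show ?thesis
      using assms by linarith
  qed
  then show ?thesis
    unfolding S_B_def by simp
qed

lemma S_B_l0_eq:
  fixes B :: "'l::finite set"
  assumes "l0 \<notin> B"
  shows "S_B_l0 u n s B l0 = {x \<in> R_B u B. (\<Sum>i\<in>-B. x$i) - x$l0 < s / n - (real (card B) + 1) / u}"
proof -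
  have "UNIV - (B \<union> {l0}) = -B - {l0}" by auto
  then have "(\<Sum>i\<in>UNIV - (B \<union> {l0}). x$i) = (\<Sum>i\<in>-B. x$i) - x$l0" for x :: "real^'l"
    using assms by (simp add: sum_diff1)
  then have "s / n > (real (card B) + 1) / u + (\<Sum>i\<in>UNIV - (B \<union> {l0}). x$i)
      \<longleftrightarrow> (\<Sum>i\<in>-B. x$i) - x$l0 < s / n - (real (card B) + 1) / u" for x :: "real^'l"
    by (metis add.commute less_diff_eq)
  then show ?thesis
    unfolding S_B_l0_def by simp
qed

definition concentrate_excess :: "real \<Rightarrow> 'l::finite set \<Rightarrow> real^'l \<Rightarrow> 'l \<Rightarrow> real^'l" where
  "concentrate_excess a B x j =
     (\<chi> i. if i \<in> B then x$i else if i = j then a + (\<Sum>k\<in>-B. (x$k - a)) else a)"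

lemma sum_concentrate_excess:
  fixes B :: "'l::finite set"
  assumes "j \<notin> B"
  shows "(\<Sum>i\<in>-B. concentrate_excess a B x j $ i) = (\<Sum>i\<in>-B. x$i)"
proof -
  have "(\<Sum>i\<in>-B. concentrate_excess a B x j $ i)
      = (\<Sum>i\<in>-B. a + (if i = j then (\<Sum>k\<in>-B. (x$k - a)) else 0))"
    by (intro sum.cong) (auto simp: concentrate_excess_def)
  also have "\<dots> = card (-B) * a + (\<Sum>k\<in>-B. (x$k - a))"
    using assms by (simp add: sum.distrib)
  also have "\<dots> = (\<Sum>i\<in>-B. x$i)"
    by (simp add: sum_subtractf)
  finally show ?thesis .
qed

lemma concentrate_excess_barycentre:
  fixes x :: "real^'l::finite"
  assumes "B \<noteq> UNIV" and "\<And>i. i \<notin> B \<Longrightarrow> a < x$i"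
  defines "D \<equiv> \<Sum>k\<in>-B. (x$k - a)"
  shows "0 < D" and "x = (\<Sum>j\<in>-B. ((x$j - a) / D) *\<^sub>R concentrate_excess a B x j)"
proof -
  show "0 < D"
    unfolding D_def using assms by (intro sum_pos) auto
  then have weights: "(\<Sum>j\<in>-B. (x$j - a) / D) = 1"
    unfolding D_def by (simp flip: sum_divide_distrib)
  show "x = (\<Sum>j\<in>-B. ((x$j - a) / D) *\<^sub>R concentrate_excess a B x j)"
  proof (subst vec_eq_iff, intro allI)
    fix i
    have "(\<Sum>j\<in>-B. ((x$j - a) / D) *\<^sub>R concentrate_excess a B x j) $ i
        = (\<Sum>j\<in>-B. (x$j - a) / D * concentrate_excess a B x j $ i)"
      by (simp add: sum_component)
    also have "\<dots> = x$i"
    proof (cases "i \<in> B")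
      case True
      then have "(\<Sum>j\<in>-B. (x$j - a) / D * concentrate_excess a B x j $ i)
          = (\<Sum>j\<in>-B. (x$j - a) / D) * x$i"
        by (simp add: concentrate_excess_def sum_distrib_right)
      then show ?thesis
        using weights by simp
    next
      case False
      have "(\<Sum>j\<in>-B. (x$j - a) / D * concentrate_excess a B x j $ i)
          = (\<Sum>j\<in>-B. (x$j - a) / D * a + (if j = i then (x$j - a) / D * D else 0))"
        using False \<open>0 < D\<close> by (intro sum.cong) (auto simp: concentrate_excess_def field_simps simp flip: D_def)
      also have "\<dots> = (\<Sum>j\<in>-B. (x$j - a) / D) * a + (x$i - a) / D * D"
        using False by (simp add: sum.distrib sum_distrib_right)
      also have "\<dots> = a + (x$i - a)"
        using \<open>0 < D\<close> weights by simp
      finally show ?thesis by simp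
    qed
    finally show "x$i = (\<Sum>j\<in>-B. ((x$j - a) / D) *\<^sub>R concentrate_excess a B x j) $ i" ..
  qed
qed

lemma step_towards_concentrate_excess_in_slab:
  fixes x :: "real^'l::finite"
  assumes "1 < u" and "x \<in> R_B u B" and "j \<notin> B"
    and "(real (card (-B)) - 1) / u < K" and "(\<Sum>i\<in>-B. x$i) < K + 1"
  obtains \<theta> where "0 < \<theta>"
    and "(1 - \<theta>) *\<^sub>R x + \<theta> *\<^sub>R concentrate_excess (1/u) B x j
           \<in> {y \<in> R_B u B. (\<Sum>i\<in>-B. y$i) - y$j < K}"
proof -
  define a where "a = 1/u"
  define S where "S = (\<Sum>i\<in>-B. x$i)"
  define E where "E = (\<Sum>k\<in>-B - {j}. (x$k - a))"
  have xB: "0 < x$i \<and> x$i \<le> a" if "i \<in> B" for i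
    using assms(1,2) that by (simp add: mem_R_B a_def)
  have xC: "a < x$i \<and> x$i < 1" if "i \<notin> B" for i
    using assms(1,2) that by (simp add: mem_R_B a_def)
  have "0 \<le> E"
    unfolding E_def using xC by (intro sum_nonneg) (auto simp: less_imp_le)
  have excess: "(\<Sum>k\<in>-B. (x$k - a)) = (x$j - a) + E"
    unfolding E_def using assms(3) by (simp add: sum.remove)
  have "(\<Sum>k\<in>-B. (x$k - a)) = S - card (-B) * a"
    unfolding S_def by (simp add: sum_subtractf)
  moreover have "(real (card (-B)) - 1) / u = card (-B) * a - a"
    by (simp add: a_def diff_divide_distrib)
  ultimately have "S - x$j - K < E"
    using excess assms(4) by linarith
  moreover have "S - x$j - K < 1 - x$j" "0 < 1 - x$j"
    using assms(5) xC[OF assms(3)] unfolding S_def by auto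
  ultimately obtain \<theta> where \<theta>: "0 < \<theta>" "\<theta> < 1" "S - x$j - K < \<theta> * E" "\<theta> * E < 1 - x$j"
    using exists_factor_between[OF \<open>0 \<le> E\<close>] by blast
  define z where "z = (1 - \<theta>) *\<^sub>R x + \<theta> *\<^sub>R concentrate_excess a B x j"
  have z_B: "z$i = x$i" if "i \<in> B" for i
    using that by (simp add: z_def concentrate_excess_def algebra_simps)
  have z_C: "z$i = (1 - \<theta>) * x$i + \<theta> * a" if "i \<notin> B" "i \<noteq> j" for i
    using that by (simp add: z_def concentrate_excess_def)
  have z_j: "z$j = x$j + \<theta> * E"
    using assms(3) excess by (simp add: z_def concentrate_excess_def algebra_simps)
  have "(\<Sum>i\<in>-B. z$i) = (1 - \<theta>) * S + \<theta> * (\<Sum>i\<in>-B. concentrate_excess a B x j $ i)"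
    unfolding z_def S_def by (simp add: sum.distrib sum_distrib_left)
  then have z_sum: "(\<Sum>i\<in>-B. z$i) = S"
    using sum_concentrate_excess[OF assms(3)] unfolding S_def by (simp add: algebra_simps)
  have "a < z$i \<and> z$i < 1" if "i \<notin> B" for i
  proof (cases "i = j")
    case True
    have "0 \<le> \<theta> * E" using \<theta>(1) \<open>0 \<le> E\<close> by simp
    then show ?thesis using z_j \<theta>(4) xC[OF assms(3)] unfolding True by linarith
  next
    case False
    have "z$i - a = (1 - \<theta>) * (x$i - a)" "1 - z$i = (1 - \<theta>) * (1 - x$i) + \<theta> * (1 - a)"
      using z_C[OF that False] by (simp_all add: algebra_simps)
    moreover have "0 < (1 - \<theta>) * (x$i - a)" "0 < (1 - \<theta>) * (1 - x$i) + \<theta> * (1 - a)"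
      using \<theta>(1,2) xC[OF that] by (auto intro!: add_pos_pos)
    ultimately have "0 < z$i - a" "0 < 1 - z$i" by simp_all
    then show ?thesis by simp
  qed
  then have "z \<in> R_B u B"
    using assms(1) xB z_B by (simp add: mem_R_B a_def)
  moreover have "(\<Sum>i\<in>-B. z$i) - z$j < K"
    using z_sum z_j \<theta>(3) by simp
  ultimately show ?thesis
    using that \<theta>(1) unfolding z_def a_def by blast
qed

lemma mem_convex_hull_Union_slabs:
  fixes B :: "'l::finite set"
  assumes "1 < u" and "B \<noteq> UNIV" and "(real (card (-B)) - 1) / u < K"
    and x_R: "x \<in> R_B u B" and x_sum: "(\<Sum>i\<in>-B. x$i) < K + 1"
  shows "x \<in> convex hull (\<Union>j\<in>-B. {y \<in> R_B u B. (\<Sum>i\<in>-B. y$i) - y$j < K})"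
    (is "x \<in> convex hull (\<Union>j\<in>-B. ?slab j)")
proof -
  define v where "v = concentrate_excess (1/u) B x"
  define D where "D = (\<Sum>k\<in>-B. (x$k - 1/u))"
  have excess_pos: "1/u < x$i" if "i \<notin> B" for i
    using assms(1) x_R that by (simp add: mem_R_B)
  note barycentre = concentrate_excess_barycentre[OF assms(2) excess_pos]
  have "0 < D"
    unfolding D_def by (rule barycentre(1))
  have x_eq: "x = (\<Sum>j\<in>-B. ((x$j - 1/u) / D) *\<^sub>R v j)"
    unfolding D_def v_def by (rule barycentre(2))
  have weights: "(\<Sum>j\<in>-B. (x$j - 1/u) / D) = 1"
    using \<open>0 < D\<close> unfolding D_def by (simp flip: sum_divide_distrib)
  have "\<forall>j\<in>-B. \<exists>\<theta>. 0 < \<theta> \<and> (1 - \<theta>) *\<^sub>R x + \<theta> *\<^sub>R v j \<in> ?slab j"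
  proof
    fix j assume "j \<in> -B"
    then obtain \<theta> where "0 < \<theta>" "(1 - \<theta>) *\<^sub>R x + \<theta> *\<^sub>R v j \<in> ?slab j"
      using step_towards_concentrate_excess_in_slab[OF assms(1) x_R _ assms(3) x_sum, folded v_def]
      by blast
    then show "\<exists>\<theta>. 0 < \<theta> \<and> (1 - \<theta>) *\<^sub>R x + \<theta> *\<^sub>R v j \<in> ?slab j"
      by (intro exI[of _ \<theta>] conjI)
  qed
  then obtain \<theta> where "\<forall>j\<in>-B. 0 < \<theta> j \<and> (1 - \<theta> j) *\<^sub>R x + \<theta> j *\<^sub>R v j \<in> ?slab j"
    by (rule bchoice[THEN exE])
  then have \<theta>: "\<And>j. j \<notin> B \<Longrightarrow> 0 < \<theta> j"
    and slab: "\<And>j. j \<notin> B \<Longrightarrow> (1 - \<theta> j) *\<^sub>R x + \<theta> j *\<^sub>R v j \<in> ?slab j"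
    by auto
  have "0 \<le> (x$j - 1/u) / D" if "j \<notin> B" for j
    using excess_pos[OF that] \<open>0 < D\<close> by simp
  then have "x \<in> convex hull ((\<lambda>j. (1 - \<theta> j) *\<^sub>R x + \<theta> j *\<^sub>R v j) ` (-B))"
    using weights \<theta> by (intro mem_convex_hull_steps_towards[OF _ _ _ x_eq]) auto
  also have "\<dots> \<subseteq> convex hull (\<Union>j\<in>-B. ?slab j)"
    using slab by (intro hull_mono) auto
  finally show ?thesis .
qed

lemma convex_hull_Union_slabs:
  fixes B :: "'l::finite set"
  assumes "1 < u" and "B \<noteq> UNIV" and "(real (card (-B)) - 1) / u < K"
  shows "convex hull (\<Union>j\<in>-B. {x \<in> R_B u B. (\<Sum>i\<in>-B. x$i) - x$j < K})
           = {x \<in> R_B u B. (\<Sum>i\<in>-B. x$i) < K + 1}"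
    (is "convex hull (\<Union>j\<in>-B. ?slab j) = ?S")
proof
  have "?slab j \<subseteq> ?S" if "j \<notin> B" for j
  proof
    fix y assume y: "y \<in> ?slab j"
    then have "y$j < 1" using assms(1) that by (simp add: mem_R_B)
    then show "y \<in> ?S" using y by auto
  qed
  then show "convex hull (\<Union>j\<in>-B. ?slab j) \<subseteq> ?S"
    by (intro hull_minimal convex_R_B_sum_less) auto
  show "?S \<subseteq> convex hull (\<Union>j\<in>-B. ?slab j)"
    using mem_convex_hull_Union_slabs[OF assms] by blast
qed

theorem proposition5p3:
  fixes n :: nat and u u' s :: real and B :: "'l::finite set"
  assumes "n \<ge> 1"
    and "1 < u" and "u \<le> 2" and "1/u + 1/u' = 1"
    and "s > real CARD('l) * real n / u"
    and "B \<subset> UNIV"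
  shows "convex hull (\<Union>l0\<in>UNIV - B. S_B_l0 u n s B l0) = S_B u u' n s B"
proof -
  define K where "K = s / n - (real (card B) + 1) / u"
  have "real CARD('l) / u < s / n"
    using assms(1,5) by (simp add: field_simps)
  moreover have "real CARD('l) = real (card (-B)) + real (card B)"
    using card_Un_disjoint[of "-B" B] by simp
  ultimately have "(real (card (-B)) - 1) / u < K"
    unfolding K_def by (simp add: diff_divide_distrib add_divide_distrib)
  then have "convex hull (\<Union>j\<in>-B. {x \<in> R_B u B. (\<Sum>i\<in>-B. x$i) - x$j < K})
      = {x \<in> R_B u B. (\<Sum>i\<in>-B. x$i) < K + 1}"
    using assms(2,6) by (intro convex_hull_Union_slabs) auto
  moreover have "(\<Union>l0\<in>UNIV - B. S_B_l0 u n s B l0)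
      = (\<Union>j\<in>-B. {x \<in> R_B u B. (\<Sum>i\<in>-B. x$i) - x$j < K})"
    unfolding Compl_eq_Diff_UNIV[symmetric] K_def by (intro SUP_cong refl) (simp add: S_B_l0_eq)
  moreover have "S_B u u' n s B = {x \<in> R_B u B. (\<Sum>i\<in>-B. x$i) < K + 1}"
    unfolding K_def by (rule S_B_eq[OF assms(4)])
  ultimately show ?thesis
    by simp
qed

end
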